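(* Let $\mathbb{F}$ be a field, $m,b\in\mathbb{F}$ with $m\ne0$, $m\neq1$, let $\mathfrak{A}$ be the unital associative $\mathbb{F}$-algebra generated by $A,B$ subject to $AB=mBA+bI$, and let $C=AB-BA$. For every positive integer $k$, $$(1-m^{k+1})C^{k+1}=(1-m^k)\,b\,C^k-\frac{\big((\mathrm{ad}\,B)\circ(\mathrm{ad}\,C)^k\big)(A)}{(1-m)^{k-1}m^{-k}}.$$
   Context: $[P,Q]=PQ-QP$; for $U\in\mathfrak{A}$, $\mathrm{ad}\,U:\mathfrak{A}\to\mathfrak{A}$ is $V\mapsto[U,V]$, and $(\mathrm{ad}\,U)^k$ is its $k$-fold composition. *)

theory Defs
  imports Main
begin

text \<open>A unital associative algebra over a field 'f is modelled as a ring 'a together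
with a unital ring homomorphism from 'f into the centre of 'a (the structure map
c \<mapsto> c I); scalar multiplication c . U is phi c * U.\<close>
definition algebra_structure_map :: "('f::field \<Rightarrow> 'a::ring_1) \<Rightarrow> bool" where
  "algebra_structure_map phi \<longleftrightarrow>
     phi 1 = 1 \<and>
     (\<forall>x y. phi (x + y) = phi x + phi y) \<and>
     (\<forall>x y. phi (x * y) = phi x * phi y) \<and>
     (\<forall>x U. phi x * U = U * phi x)"

definition commutator :: "'a::ring \<Rightarrow> 'a \<Rightarrow> 'a" where
  "commutator P Q = P * Q - Q * P"

definition ad :: "'a::ring \<Rightarrow> 'a \<Rightarrow> 'a" where
  "ad U = (\<lambda>V. commutator U V)"

end

theory Submission
  imports Defs
begin

text \<open>The defining relation gives \<open>C = (m - 1) BA + b\<close>, from which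
\<open>AC = m CA\<close> and \<open>CB = m BC\<close>. Hence \<open>(ad C)\<^sup>k A = (1 - m)\<^sup>k C\<^sup>k A\<close> and
\<open>B C\<^sup>k = m\<^sup>-\<^sup>k C\<^sup>k B\<close>, so \<open>ad B ((ad C)\<^sup>k A)\<close> is an explicit combination of
\<open>C\<^sup>k BA\<close> and \<open>C\<^sup>k\<close>; so is \<open>C\<^sup>k\<^sup>+\<^sup>1 = C\<^sup>k ((m - 1) BA + b)\<close>, and comparing
coefficients is an identity in the field.\<close>

locale scalar_algebra =
  fixes phi :: "'f::field \<Rightarrow> 'a::ring_1"
  assumes structure_map: "algebra_structure_map phi"
begin

lemma map_one: "phi 1 = 1"
  and map_add: "phi (x + y) = phi x + phi y"
  and map_mult: "phi (x * y) = phi x * phi y"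
  and central: "phi x * U = U * phi x"
  using structure_map unfolding algebra_structure_map_def by blast+

lemma map_zero: "phi 0 = 0"
  using map_add[of 0 0] by simp

lemma map_minus: "phi (- x) = - phi x"
  using map_add[of "- x" x] by (simp add: map_zero eq_neg_iff_add_eq_0)

lemma map_diff: "phi (x - y) = phi x - phi y"
  using map_add[of x "- y"] by (simp add: map_minus)

lemma scale_scale: "phi a * (phi c * U) = phi (a * c) * U"
  by (simp add: map_mult mult.assoc)

text \<open>Together with \<open>scale_scale\<close> this rule loops in the simplifier, so it is always
used instantiated at the left factor.\<close>

lemma mult_scale_right: "U * (phi a * V) = phi a * (U * V)"
  by (metis central mult.assoc)

lemma scale_add: "phi a * U + phi c * U = phi (a + c) * U"
  by (simp add: map_add distrib_right)

lemma scale_diff: "phi a * U - phi c * U = phi (a - c) * U"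
  by (simp add: map_diff left_diff_distrib)

lemma qcommute_power_left:
  assumes "X * Y = phi q * (Y * X)"
  shows "X ^ n * Y = phi (q ^ n) * (Y * X ^ n)"
proof (induction n)
  case 0
  show ?case by (simp add: map_one)
next
  case (Suc n)
  have "X ^ Suc n * Y = phi (q ^ n) * (X * Y * X ^ n)"
    by (simp add: Suc mult.assoc mult_scale_right[of X])
  also have "\<dots> = phi (q ^ Suc n) * (Y * X ^ Suc n)"
    by (simp add: assms scale_scale mult.assoc mult.commute)
  finally show ?case .
qed

lemma ad_power_qcommute:
  assumes "X * Y = phi q * (Y * X)"
  shows "(ad Y ^^ n) X = phi ((1 - q) ^ n) * (Y ^ n * X)"
proof (induction n)
  case 0
  show ?case by (simp add: map_one)
next
  case (Suc n)
  have "(ad Y ^^ Suc n) X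
      = phi ((1 - q) ^ n) * (Y ^ Suc n * X) - phi ((1 - q) ^ n) * (Y ^ n * (X * Y))"
    by (simp only: funpow.simps comp_apply Suc)
      (simp add: ad_def commutator_def mult_scale_right[of Y] mult.assoc)
  also have "\<dots> = phi ((1 - q) ^ n) * (Y ^ Suc n * X) - phi ((1 - q) ^ n * q) * (Y ^ Suc n * X)"
    by (simp add: assms mult_scale_right[of "Y ^ n"] scale_scale mult.assoc power_Suc2 del: power_Suc)
  also have "\<dots> = phi ((1 - q) ^ Suc n) * (Y ^ Suc n * X)"
    by (simp add: scale_diff algebra_simps)
  finally show ?case .
qed

end

locale deformed_commutation = scalar_algebra phi for phi :: "'f::field \<Rightarrow> 'a::ring_1" +
  fixes m b :: 'f and A B :: 'a
  assumes relation: "A * B = phi m * (B * A) + phi b"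
begin

abbreviation C :: 'a where "C \<equiv> A * B - B * A"

lemma C_eq: "C = phi (m - 1) * (B * A) + phi b"
  by (simp add: relation map_diff map_one left_diff_distrib)

lemma A_C_qcommute: "A * C = phi m * (C * A)"
proof -
  have "A * C = phi (m - 1) * (A * B * A) + phi b * A"
    by (simp add: C_eq distrib_left mult_scale_right[of A] mult.assoc central[of b])
  also have "\<dots> = phi (m * (m - 1)) * (B * A * A) + phi (m * b) * A"
    by (simp add: relation distrib_right distrib_left scale_scale mult.assoc add.assoc scale_add
        algebra_simps)
  also have "\<dots> = phi m * (C * A)"
    by (simp add: C_eq distrib_right distrib_left scale_scale mult.assoc)
  finally show ?thesis .
qed

lemma C_B_qcommute: "C * B = phi m * (B * C)"
proof -
  have "C * B = phi (m - 1) * (B * (A * B)) + phi b * B"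
    by (simp add: C_eq distrib_right mult.assoc)
  also have "\<dots> = phi (m * (m - 1)) * (B * (B * A)) + phi (m * b) * B"
    by (simp add: relation distrib_left distrib_right mult_scale_right[of B] scale_scale add.assoc
        scale_add central[of b B, symmetric] algebra_simps)
  also have "\<dots> = phi m * (B * C)"
    by (simp add: C_eq distrib_left scale_scale mult_scale_right[of B] central[of b B, symmetric])
  finally show ?thesis .
qed

lemma C_power_Suc: "C ^ Suc k = phi (m - 1) * (C ^ k * (B * A)) + phi b * C ^ k"
proof -
  have "C ^ Suc k = C ^ k * (phi (m - 1) * (B * A) + phi b)"
    by (simp only: power_Suc2 C_eq[symmetric])
  then show ?thesis
    by (simp only: distrib_left mult_scale_right[of "C ^ k"] central[of b])
qed

lemma ad_B_ad_C_power:
  assumes "m \<noteq> 0"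
  shows "(ad B \<circ> (ad C ^^ k)) A
    = phi ((1 - m) ^ k * (inverse (m ^ k) - m)) * (C ^ k * (B * A))
      - phi ((1 - m) ^ k * b) * C ^ k"
proof -
  define K where "K = C ^ k"
  have B_K: "B * K = phi (inverse (m ^ k)) * (K * B)"
    using assms by (simp add: K_def qcommute_power_left[OF C_B_qcommute] scale_scale map_one)
  have "(ad B \<circ> (ad C ^^ k)) A = phi ((1 - m) ^ k) * (B * K * A - K * (A * B))"
    by (simp only: comp_apply ad_power_qcommute[OF A_C_qcommute] K_def)
      (simp add: ad_def commutator_def mult_scale_right[of B] mult.assoc right_diff_distrib)
  also have "B * K * A - K * (A * B)
      = phi (inverse (m ^ k)) * (K * (B * A)) - (phi m * (K * (B * A)) + phi b * K)"
    by (simp only: B_K relation distrib_left mult_scale_right[of K] central[of b K] mult.assoc)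
  also have "\<dots> = phi (inverse (m ^ k) - m) * (K * (B * A)) - phi b * K"
    by (simp only: diff_diff_eq[symmetric] scale_diff)
  finally show ?thesis
    by (simp add: K_def right_diff_distrib scale_scale)
qed

theorem commutator_power_recursion:
  assumes "m \<noteq> 0" and "m \<noteq> 1" and "k \<ge> 1"
  shows "phi (1 - m ^ (k + 1)) * C ^ (k + 1)
       = phi ((1 - m ^ k) * b) * C ^ k
         - phi (inverse ((1 - m) ^ (k - 1) * inverse (m ^ k))) * (ad B \<circ> (ad C ^^ k)) A"
proof -
  define D where "D = inverse ((1 - m) ^ (k - 1) * inverse (m ^ k))"
  define K where "K = C ^ k"
  define X where "X = K * (B * A)"
  have D_scale: "D * (1 - m) ^ k = (1 - m) * m ^ k"
    using assms by (cases k) (auto simp: D_def field_simps)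
  have X_coeff: "D * ((1 - m) ^ k * (inverse (m ^ k) - m)) = - ((1 - m ^ (k + 1)) * (m - 1))"
  proof -
    have "D * ((1 - m) ^ k * (inverse (m ^ k) - m))
        = (1 - m) * (m ^ k * inverse (m ^ k) - m ^ k * m)"
      by (simp only: mult.assoc[symmetric] D_scale) (simp only: mult.assoc right_diff_distrib)
    then show ?thesis
      using assms(1) by (simp add: algebra_simps)
  qed
  have K_coeff: "(1 - m ^ k) * b + D * ((1 - m) ^ k * b) = (1 - m ^ (k + 1)) * b"
  proof -
    have "D * ((1 - m) ^ k * b) = (1 - m) * m ^ k * b"
      by (simp only: mult.assoc[symmetric] D_scale)
    then show ?thesis
      by (simp add: algebra_simps)
  qed
  have "phi ((1 - m ^ k) * b) * K - phi D * (ad B \<circ> (ad C ^^ k)) A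
      = phi ((1 - m ^ k) * b) * K
        - (phi (D * ((1 - m) ^ k * (inverse (m ^ k) - m))) * X - phi (D * ((1 - m) ^ k * b)) * K)"
    by (simp only: ad_B_ad_C_power[OF assms(1)] K_def X_def right_diff_distrib scale_scale)
  also have "\<dots> = phi ((1 - m ^ (k + 1)) * (m - 1)) * X + phi ((1 - m ^ (k + 1)) * b) * K"
    by (simp only: diff_diff_eq2 scale_add K_coeff X_coeff map_minus mult_minus_left
        diff_minus_eq_add add.commute)
  also have "\<dots> = phi (1 - m ^ (k + 1)) * (phi (m - 1) * X + phi b * K)"
    by (simp only: distrib_left scale_scale)
  also have "\<dots> = phi (1 - m ^ (k + 1)) * C ^ (k + 1)"
    by (simp only: C_power_Suc Suc_eq_plus1[symmetric] K_def X_def)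
  finally show ?thesis
    by (simp only: D_def K_def)
qed

end

theorem lemma4p6:
  fixes phi :: "'f::field \<Rightarrow> 'a::ring_1"
    and m b :: 'f and A B :: 'a and k :: nat
  assumes "algebra_structure_map phi"
    and "m \<noteq> 0" and "m \<noteq> 1"
    and "A * B = phi m * (B * A) + phi b"
    and "k \<ge> 1"
  shows "let C = A * B - B * A in
     phi (1 - m ^ (k + 1)) * C ^ (k + 1)
       = phi ((1 - m ^ k) * b) * C ^ k
         - phi (inverse ((1 - m) ^ (k - 1) * inverse (m ^ k))) * (ad B \<circ> (ad C ^^ k)) A"
proof -
  interpret deformed_commutation phi m b A B
    by unfold_locales (use assms(1,4) in auto)
  show ?thesis
    unfolding Let_def using commutator_power_recursion assms(2,3,5) .
qed

end
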